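(* Let $\overline Y$ be a balanced real random variable whose support has at most two points, and let $y_1,y_2$ be independent copies of $\overline Y$. Then for all real numbers $x_1,x_2$, \[ \mathbb{E}_{y_1,y_2}\big(|x_1+y_1|-|x_2+y_2|\big)^2 \;\ge\; \frac14\big(|x_1|-|x_2|\big)^2 . \]
   Context: A random variable is balanced if it has expectation $0$. *)

theory Defs
  imports "HOL-Probability.Probability"
begin

end

theory Submission
  imports Defs
begin

text \<open>Let y take the value a with probability p and b with probability q; balance means
  p a + q b = 0, so a and b lie on opposite sides of 0. By symmetry we may assume x1 \<ge> \<bar>x2\<bar> and put
  d = x1 - \<bar>x2\<bar>. If x1 + a < 0, each diagonal outcome (a, a), (b, b) has squared gap at least d^2,
  and p^2 + q^2 \<ge> 1/2. Otherwise x1 + y1 is never negative, so the cross term vanishes because y1 is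
  centred and the expectation is E y1^2 + E (x1 - \<bar>x2 + y2\<bar>)^2; since \<bar>v\<bar> + (x1 - \<bar>x2 + v\<bar>) \<ge> d for
  every v, each value of y2 contributes at least d^2/2. Hence the expectation is even at least
  d^2/2.\<close>

definition two_point_abs_gap :: "real \<Rightarrow> real \<Rightarrow> real \<Rightarrow> real \<Rightarrow> real \<Rightarrow> real \<Rightarrow> real" where
  "two_point_abs_gap p a q b x1 x2 =
     p * p * (\<bar>x1 + a\<bar> - \<bar>x2 + a\<bar>)\<^sup>2 + p * q * (\<bar>x1 + a\<bar> - \<bar>x2 + b\<bar>)\<^sup>2
   + q * p * (\<bar>x1 + b\<bar> - \<bar>x2 + a\<bar>)\<^sup>2 + q * q * (\<bar>x1 + b\<bar> - \<bar>x2 + b\<bar>)\<^sup>2"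

lemma two_point_abs_gap_swap_points:
  "two_point_abs_gap p a q b x1 x2 = two_point_abs_gap q b p a x1 x2"
  unfolding two_point_abs_gap_def by (simp add: algebra_simps)

lemma two_point_abs_gap_swap_args:
  "two_point_abs_gap p a q b x1 x2 = two_point_abs_gap p a q b x2 x1"
  unfolding two_point_abs_gap_def by (simp add: algebra_simps power2_commute)

lemma two_point_abs_gap_uminus:
  "two_point_abs_gap p a q b (- x1) (- x2) = two_point_abs_gap p (- a) q (- b) x1 x2"
proof -
  have "\<bar>- x + y\<bar> = \<bar>x + - y\<bar>" for x y :: real
    by linarith
  then show ?thesis
    unfolding two_point_abs_gap_def by simp
qed

lemma sq_le_two_sum_sq:
  fixes d s t :: real
  assumes "0 \<le> d" and "d \<le> s + t"
  shows "d\<^sup>2 \<le> 2 * (s\<^sup>2 + t\<^sup>2)"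
proof -
  have "d\<^sup>2 \<le> (s + t)\<^sup>2"
    using assms by (intro power_mono) auto
  also have "\<dots> = 2 * (s\<^sup>2 + t\<^sup>2) - (s - t)\<^sup>2"
    by (simp add: power2_eq_square algebra_simps)
  also have "\<dots> \<le> 2 * (s\<^sup>2 + t\<^sup>2)"
    by simp
  finally show ?thesis .
qed

lemma balanced_two_point_signs:
  fixes p q a b :: real
  assumes "0 \<le> p" "0 \<le> q" "p + q = 1" "p * a + q * b = 0" "a \<le> b"
  shows "a \<le> 0" "0 \<le> b"
proof -
  have "a = p * a + q * a" "b = p * b + q * b"
    using \<open>p + q = 1\<close> by (metis distrib_right mult_1)+
  moreover have "q * a \<le> q * b" "p * a \<le> p * b"
    using assms by (simp_all add: mult_left_mono)
  ultimately show "a \<le> 0" "0 \<le> b"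
    using \<open>p * a + q * b = 0\<close> by linarith+
qed

lemma two_point_abs_gap_variance_split:
  fixes p q a b x1 x2 :: real
  assumes "p + q = 1" "p * a + q * b = 0" "0 \<le> x1 + a" "0 \<le> x1 + b"
  shows "two_point_abs_gap p a q b x1 x2
       = p * (a\<^sup>2 + (x1 - \<bar>x2 + a\<bar>)\<^sup>2) + q * (b\<^sup>2 + (x1 - \<bar>x2 + b\<bar>)\<^sup>2)"
proof -
  have centred: "p * (a + c)\<^sup>2 + q * (b + c)\<^sup>2 = p * a\<^sup>2 + q * b\<^sup>2 + c\<^sup>2" for c
  proof -
    have "p * (a + c)\<^sup>2 + q * (b + c)\<^sup>2 = p * a\<^sup>2 + q * b\<^sup>2 + 2 * c * (p * a + q * b) + (p + q) * c\<^sup>2"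
      by (simp add: power2_eq_square algebra_simps)
    then show ?thesis
      using assms(1,2) by simp
  qed
  define ca cb where "ca = x1 - \<bar>x2 + a\<bar>" and "cb = x1 - \<bar>x2 + b\<bar>"
  have "two_point_abs_gap p a q b x1 x2
      = p * (p * (a + ca)\<^sup>2 + q * (b + ca)\<^sup>2) + q * (p * (a + cb)\<^sup>2 + q * (b + cb)\<^sup>2)"
    using assms(3,4) unfolding two_point_abs_gap_def ca_def cb_def by (simp add: algebra_simps)
  also have "\<dots> = (p + q) * (p * a\<^sup>2 + q * b\<^sup>2) + p * ca\<^sup>2 + q * cb\<^sup>2"
    unfolding centred by (simp add: algebra_simps)
  finally show ?thesis
    using assms(1) unfolding ca_def cb_def by (simp add: algebra_simps)
qed

lemma two_point_abs_gap_lower_bound_ordered: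
  fixes p q a b x1 x2 :: real
  assumes p: "0 \<le> p" and q: "0 \<le> q" and pq: "p + q = 1" and bal: "p * a + q * b = 0"
    and a: "a \<le> 0" and b: "0 \<le> b" and x: "\<bar>x2\<bar> \<le> x1"
  shows "(x1 - \<bar>x2\<bar>)\<^sup>2 \<le> 2 * two_point_abs_gap p a q b x1 x2"
proof -
  define d where "d = x1 - \<bar>x2\<bar>"
  have d: "0 \<le> d"
    using x by (simp add: d_def)
  show ?thesis
  proof (cases "x1 + a < 0")
    case True
    have "\<bar>x1 + a\<bar> = - (x1 + a)" "\<bar>x2 + a\<bar> = - (x2 + a)"
      using True x by auto
    then have "(\<bar>x1 + a\<bar> - \<bar>x2 + a\<bar>)\<^sup>2 = (x1 - x2)\<^sup>2"
      by (simp add: power2_commute)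
    moreover have "d\<^sup>2 \<le> (x1 - x2)\<^sup>2"
      using d unfolding d_def by (intro power_mono) auto
    ultimately have "d\<^sup>2 \<le> (\<bar>x1 + a\<bar> - \<bar>x2 + a\<bar>)\<^sup>2"
      by simp
    then have diag_a: "p * p * d\<^sup>2 \<le> p * p * (\<bar>x1 + a\<bar> - \<bar>x2 + a\<bar>)\<^sup>2"
      by (simp add: mult_left_mono)
    have "d\<^sup>2 \<le> (\<bar>x1 + b\<bar> - \<bar>x2 + b\<bar>)\<^sup>2"
      using d b x abs_triangle_ineq[of x2 b] unfolding d_def by (intro power_mono) auto
    then have diag_b: "q * q * d\<^sup>2 \<le> q * q * (\<bar>x1 + b\<bar> - \<bar>x2 + b\<bar>)\<^sup>2"
      by (simp add: mult_left_mono)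
    have "0 \<le> p * q * (\<bar>x1 + a\<bar> - \<bar>x2 + b\<bar>)\<^sup>2 + q * p * (\<bar>x1 + b\<bar> - \<bar>x2 + a\<bar>)\<^sup>2"
      using p q by simp
    then have diag: "p * p * d\<^sup>2 + q * q * d\<^sup>2 \<le> two_point_abs_gap p a q b x1 x2"
      using diag_a diag_b unfolding two_point_abs_gap_def by linarith
    have "1 \<le> 2 * (p * p + q * q)"
      using sq_le_two_sum_sq[of 1 p q] pq by (simp add: power2_eq_square)
    then have "d\<^sup>2 \<le> 2 * (p * p * d\<^sup>2 + q * q * d\<^sup>2)"
      using mult_right_mono[of 1 "2 * (p * p + q * q)" "d\<^sup>2"] by (simp add: algebra_simps)
    also have "\<dots> \<le> 2 * two_point_abs_gap p a q b x1 x2"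
      using diag by simp
    finally show ?thesis
      unfolding d_def .
  next
    case False
    have "d\<^sup>2 \<le> 2 * (a\<^sup>2 + (x1 - \<bar>x2 + a\<bar>)\<^sup>2)"
      using sq_le_two_sum_sq[of d "- a" "x1 - \<bar>x2 + a\<bar>"] d a abs_triangle_ineq[of x2 a]
      unfolding d_def by simp
    moreover have "d\<^sup>2 \<le> 2 * (b\<^sup>2 + (x1 - \<bar>x2 + b\<bar>)\<^sup>2)"
      using sq_le_two_sum_sq[of d b "x1 - \<bar>x2 + b\<bar>"] d b abs_triangle_ineq[of x2 b]
      unfolding d_def by simp
    ultimately have "p * d\<^sup>2 + q * d\<^sup>2
        \<le> p * (2 * (a\<^sup>2 + (x1 - \<bar>x2 + a\<bar>)\<^sup>2)) + q * (2 * (b\<^sup>2 + (x1 - \<bar>x2 + b\<bar>)\<^sup>2))"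
      using p q by (intro add_mono mult_left_mono)
    also have "\<dots> = 2 * two_point_abs_gap p a q b x1 x2"
      using False b x pq bal by (subst two_point_abs_gap_variance_split) (auto simp: algebra_simps)
    finally show ?thesis
      using pq unfolding d_def by (simp add: distrib_right[symmetric])
  qed
qed

lemma two_point_abs_gap_lower_bound_dominant:
  fixes p q a b x1 x2 :: real
  assumes p: "0 \<le> p" and q: "0 \<le> q" and pq: "p + q = 1" and bal: "p * a + q * b = 0"
    and x: "\<bar>x2\<bar> \<le> x1"
  shows "(x1 - \<bar>x2\<bar>)\<^sup>2 \<le> 2 * two_point_abs_gap p a q b x1 x2"
proof (cases "a \<le> b")
  case True
  then show ?thesis
    using two_point_abs_gap_lower_bound_ordered balanced_two_point_signs assms by blast
next
  case False
  have qp: "q + p = 1" "q * b + p * a = 0"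
    using pq bal by simp_all
  then have "b \<le> 0" "0 \<le> a"
    using balanced_two_point_signs[OF q p qp] False by simp_all
  then show ?thesis
    using two_point_abs_gap_lower_bound_ordered[OF q p qp] x
    by (simp add: two_point_abs_gap_swap_points[of p a])
qed

lemma two_point_abs_gap_lower_bound:
  fixes p q a b x1 x2 :: real
  assumes p: "0 \<le> p" and q: "0 \<le> q" and pq: "p + q = 1" and bal: "p * a + q * b = 0"
  shows "(\<bar>x1\<bar> - \<bar>x2\<bar>)\<^sup>2 \<le> 2 * two_point_abs_gap p a q b x1 x2"
proof -
  have abs_dominant: "(\<bar>x1\<bar> - \<bar>x2\<bar>)\<^sup>2 \<le> 2 * two_point_abs_gap p a q b x1 x2"
    if x: "\<bar>x2\<bar> \<le> \<bar>x1\<bar>" for x1 x2 :: real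
  proof (cases "0 \<le> x1")
    case True
    then show ?thesis
      using two_point_abs_gap_lower_bound_dominant[OF p q pq bal] x by simp
  next
    case False
    have "p * - a + q * - b = 0"
      using bal by simp
    then have "(- x1 - \<bar>- x2\<bar>)\<^sup>2 \<le> 2 * two_point_abs_gap p (- a) q (- b) (- x1) (- x2)"
      by (rule two_point_abs_gap_lower_bound_dominant[OF p q pq]) (use False x in simp)
    then show ?thesis
      using False by (simp add: two_point_abs_gap_uminus)
  qed
  show ?thesis
    using abs_dominant[of x2 x1] abs_dominant[of x1 x2]
    by (cases "\<bar>x2\<bar> \<le> \<bar>x1\<bar>") (auto simp: two_point_abs_gap_swap_args[of p a q b x2] power2_commute)
qed

lemma (in prob_space) expectation_finite_support:
  fixes Y :: "'a \<Rightarrow> 'b::t1_space" and h :: "'b \<Rightarrow> real"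
  assumes Y[measurable]: "Y \<in> borel_measurable M" and h[measurable]: "h \<in> borel_measurable borel"
    and S: "finite S" and AE_S: "AE \<omega> in M. Y \<omega> \<in> S"
  shows "expectation (\<lambda>\<omega>. h (Y \<omega>)) = (\<Sum>u\<in>S. prob (Y -` {u} \<inter> space M) * h u)"
proof -
  have events: "Y -` {u} \<inter> space M \<in> events" for u
    by measurable
  have "expectation (\<lambda>\<omega>. h (Y \<omega>))
      = expectation (\<lambda>\<omega>. \<Sum>u\<in>S. h u * indicator (Y -` {u} \<inter> space M) \<omega>)"
    by (rule integral_cong_AE; measurable?)
       (use AE_S in \<open>auto simp: indicator_def S elim!: AE_mp\<close>)
  also have "\<dots> = (\<Sum>u\<in>S. prob (Y -` {u} \<inter> space M) * h u)"
    using events by (simp add: emeasure_eq_measure mult.commute)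
  finally show ?thesis .
qed

lemma (in prob_space) prob_singleton_eq_of_distr_eq:
  fixes Y1 Y2 :: "'a \<Rightarrow> 'b::t1_space"
  assumes [measurable]: "Y1 \<in> borel_measurable M" "Y2 \<in> borel_measurable M"
    and "distr M borel Y1 = distr M borel Y2"
  shows "prob (Y2 -` {u} \<inter> space M) = prob (Y1 -` {u} \<inter> space M)"
  using assms(3) measure_distr[of Y1 M borel "{u}"] measure_distr[of Y2 M borel "{u}"] by simp

lemma (in prob_space) expectation_iid_finite_support:
  fixes Y1 Y2 :: "'a \<Rightarrow> 'b::{t1_space, second_countable_topology}" and g :: "'b \<times> 'b \<Rightarrow> real"
  assumes Y1[measurable]: "Y1 \<in> borel_measurable M" and Y2[measurable]: "Y2 \<in> borel_measurable M"
    and indep: "indep_var borel Y1 borel Y2" and distr_eq: "distr M borel Y1 = distr M borel Y2"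
    and S: "finite S" and AE_S: "AE \<omega> in M. Y1 \<omega> \<in> S"
    and g[measurable]: "g \<in> borel_measurable borel"
  shows "expectation (\<lambda>\<omega>. g (Y1 \<omega>, Y2 \<omega>))
       = (\<Sum>u\<in>S. \<Sum>v\<in>S. prob (Y1 -` {u} \<inter> space M) * prob (Y1 -` {v} \<inter> space M) * g (u, v))"
proof -
  have [measurable]: "S \<in> sets borel"
    using S by (simp add: borel_closed finite_imp_closed)
  have "AE \<omega> in distr M borel Y2. \<omega> \<in> S"
    using AE_S unfolding distr_eq[symmetric] by (subst AE_distr_iff) auto
  then have AE_S2: "AE \<omega> in M. Y2 \<omega> \<in> S"
    by (subst (asm) AE_distr_iff) auto
  have prob_pair: "prob ((\<lambda>\<omega>. (Y1 \<omega>, Y2 \<omega>)) -` {(u, v)} \<inter> space M)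
      = prob (Y1 -` {u} \<inter> space M) * prob (Y1 -` {v} \<inter> space M)" for u v
  proof -
    have "prob ((\<lambda>\<omega>. (Y1 \<omega>, Y2 \<omega>)) -` {(u, v)} \<inter> space M)
        = prob ((Y1 -` {u} \<inter> space M) \<inter> (Y2 -` {v} \<inter> space M))"
      by (rule arg_cong[where f = prob]) auto
    also have "\<dots> = prob (Y1 -` {u} \<inter> space M) * prob (Y2 -` {v} \<inter> space M)"
      using indep unfolding indep_var_eq
      by (intro indep_setD) (auto intro!: sigma_sets.Basic exI[of _ "{_}"])
    finally show ?thesis
      using prob_singleton_eq_of_distr_eq[OF Y1 Y2 distr_eq] by simp
  qed
  have "expectation (\<lambda>\<omega>. g (Y1 \<omega>, Y2 \<omega>))
      = (\<Sum>(u, v)\<in>S \<times> S. prob ((\<lambda>\<omega>. (Y1 \<omega>, Y2 \<omega>)) -` {(u, v)} \<inter> space M) * g (u, v))"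
    using AE_S AE_S2 S
    by (subst expectation_finite_support[where S = "S \<times> S"]) (auto elim: AE_mp)
  then show ?thesis
    by (simp add: prob_pair sum.cartesian_product)
qed

theorem claim8:
  fixes M :: "'a measure" and Y1 Y2 :: "'a \<Rightarrow> real" and x1 x2 :: real
  assumes "prob_space M"
    and "Y1 \<in> borel_measurable M" and "Y2 \<in> borel_measurable M"
    and "prob_space.indep_var M borel Y1 borel Y2"
    and "distr M borel Y1 = distr M borel Y2"
    and "integrable M Y1" and "prob_space.expectation M Y1 = 0"
    and "\<exists>a b. AE \<omega> in M. Y1 \<omega> \<in> {a, b}"
  shows "prob_space.expectation M (\<lambda>\<omega>. (\<bar>x1 + Y1 \<omega>\<bar> - \<bar>x2 + Y2 \<omega>\<bar>)\<^sup>2)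
           \<ge> 1/4 * (\<bar>x1\<bar> - \<bar>x2\<bar>)\<^sup>2"
proof -
  interpret prob_space M by fact
  obtain a b where "a \<noteq> b" and AE_ab: "AE \<omega> in M. Y1 \<omega> \<in> {a, b}"
  proof -
    obtain a b where "AE \<omega> in M. Y1 \<omega> \<in> {a, b}"
      using assms(8) by blast
    then have "AE \<omega> in M. Y1 \<omega> \<in> {a, if a = b then a + 1 else b}"
      by eventually_elim auto
    then show thesis
      by (rule that[rotated]) auto
  qed
  have gap_measurable:
    "(\<lambda>(u, v). (\<bar>x1 + u\<bar> - \<bar>x2 + v\<bar>)\<^sup>2) \<in> borel_measurable (borel :: (real \<times> real) measure)"
    unfolding borel_prod[symmetric] by measurable
  define p q where "p = prob (Y1 -` {a} \<inter> space M)" and "q = prob (Y1 -` {b} \<inter> space M)"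
  have "p + q = 1"
    using expectation_finite_support[OF assms(2), of "\<lambda>_. 1" "{a, b}"] AE_ab \<open>a \<noteq> b\<close>
    by (simp add: p_def q_def prob_space)
  moreover have "p * a + q * b = 0"
    using expectation_finite_support[OF assms(2), of "\<lambda>u. u" "{a, b}"] AE_ab \<open>a \<noteq> b\<close> assms(7)
    by (simp add: p_def q_def mult.commute)
  ultimately have "(\<bar>x1\<bar> - \<bar>x2\<bar>)\<^sup>2 \<le> 2 * two_point_abs_gap p a q b x1 x2"
    by (intro two_point_abs_gap_lower_bound) (auto simp: p_def q_def)
  moreover have "expectation (\<lambda>\<omega>. (\<bar>x1 + Y1 \<omega>\<bar> - \<bar>x2 + Y2 \<omega>\<bar>)\<^sup>2) = two_point_abs_gap p a q b x1 x2"
    using expectation_iid_finite_support[OF assms(2-5) _ AE_ab gap_measurable] \<open>a \<noteq> b\<close>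
    by (simp add: two_point_abs_gap_def p_def q_def algebra_simps)
  ultimately show ?thesis
    using zero_le_power2[of "\<bar>x1\<bar> - \<bar>x2\<bar>"] by linarith
qed

end
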